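(* Let $L>0$, $0<\sigma\le1$, $r>0$, and let $f(\mathbf I,\boldsymbol\phi)=\sum_{\boldsymbol\mu\in\mathcal N}f_{\boldsymbol\mu}(\mathbf I)e^{\mathrm i\boldsymbol\mu\cdot\boldsymbol\phi}$ be analytic on $\mathcal D_{L,r,\sigma}$, where $\mathcal N\subset\mathbb Z^n$ is finite. If $r<1/(2n|\mathcal N|)$, then $Qf$ is analytic on $\mathcal D_{L,r,\sigma'}$ for every $0<\sigma'<\sigma$, and $$\|Qf\|_{L,r,\sigma'}\le 2\Big(\frac{4}{\sigma-\sigma'}\Big)^n\frac{\|f\|_{L,r,\sigma}}{L}.$$
   Context: Fix $n\ge2$ and $1\le k\le n$ (here $2\le k\le n$ in the paper). $\mathcal D_{L,r,\sigma}=\{(\mathbf I,\boldsymbol\phi)\in\mathbb C^{2n}:|I_i-L\delta_{i,k}|<rL,\ |\mathrm{Im}\,\phi_i|<\sigma,\ i=1,\dots,n\}$; for functions $2\pi$-periodic in each $\phi_i$, $\|f\|_{L,r,\sigma}=\sup_{\mathcal D_{L,r,\sigma}}|f|$. For $\boldsymbol\mu\in\mathbb Z^n$, $|\boldsymbol\mu|=\max_i|\mu_i|$ and $|\mathcal N|=\sup_{\boldsymbol\mu\in\mathcal N}|\boldsymbol\mu|$. $Qf=-\mathrm i\sum_{\boldsymbol\mu\in\mathcal N,\ \mu_k\neq0}\frac{f_{\boldsymbol\mu}(\mathbf I)}{\mathbf I\cdot\boldsymbol\mu}e^{\mathrm i\boldsymbol\mu\cdot\boldsymbol\phi}$. *)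

theory Defs
  imports "HOL-Analysis.Analysis"
begin

text \<open>Holomorphy (analyticity) of a function of several complex variables on a set:
  complex Frechet differentiability at every point, i.e. the (real) Frechet derivative
  exists and is complex-linear.\<close>
definition cplx_linear2 :: "((complex^'n) \<times> (complex^'n) \<Rightarrow> complex) \<Rightarrow> bool" where
  "cplx_linear2 D \<longleftrightarrow> linear D \<and>
     (\<forall>c I phi. D ((\<chi> i. c * I $ i), (\<chi> i. c * phi $ i)) = c * D (I, phi))"

definition analytic2_on :: "((complex^'n) \<times> (complex^'n) \<Rightarrow> complex) \<Rightarrow> ((complex^'n) \<times> (complex^'n)) set \<Rightarrow> bool" where
  "analytic2_on f S \<longleftrightarrow> (\<forall>z\<in>S. \<exists>D. (f has_derivative D) (at z) \<and> cplx_linear2 D)"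

definition dom_D :: "'n \<Rightarrow> real \<Rightarrow> real \<Rightarrow> real \<Rightarrow> ((complex^'n) \<times> (complex^'n)) set" where
  "dom_D k L r \<sigma> = {(I, phi). \<forall>i. cmod (I $ i - (if i = k then complex_of_real L else 0)) < r * L
                                  \<and> \<bar>Im (phi $ i)\<bar> < \<sigma>}"

definition supnormD :: "'n \<Rightarrow> real \<Rightarrow> real \<Rightarrow> real \<Rightarrow> ((complex^'n) \<times> (complex^'n) \<Rightarrow> complex) \<Rightarrow> ereal" where
  "supnormD k L r \<sigma> f = (SUP z\<in>dom_D k L r \<sigma>. ereal (cmod (f z)))"

definition mu_norm :: "int^'n \<Rightarrow> int" where
  "mu_norm \<mu> = Max (range (\<lambda>i. \<bar>\<mu> $ i\<bar>))"

text \<open>|N| = sup of |mu| over N (taken to be 0 for empty N).\<close>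
definition set_norm :: "(int^'n) set \<Rightarrow> int" where
  "set_norm N = Max (insert 0 (mu_norm ` N))"

definition cdot :: "complex^'n \<Rightarrow> int^'n \<Rightarrow> complex" where
  "cdot x \<mu> = (\<Sum>i\<in>UNIV. x $ i * of_int (\<mu> $ i))"

definition fourier :: "(int^'n) set \<Rightarrow> (int^'n \<Rightarrow> complex^'n \<Rightarrow> complex) \<Rightarrow> (complex^'n) \<times> (complex^'n) \<Rightarrow> complex" where
  "fourier N fc = (\<lambda>(I, phi). \<Sum>\<mu>\<in>N. fc \<mu> I * exp (\<i> * cdot phi \<mu>))"

definition Qop :: "'n \<Rightarrow> (int^'n) set \<Rightarrow> (int^'n \<Rightarrow> complex^'n \<Rightarrow> complex) \<Rightarrow> (complex^'n) \<times> (complex^'n) \<Rightarrow> complex" where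
  "Qop k N fc = (\<lambda>(I, phi). - \<i> * (\<Sum>\<mu>\<in>{\<mu>\<in>N. \<mu> $ k \<noteq> 0}. fc \<mu> I / cdot I \<mu> * exp (\<i> * cdot phi \<mu>)))"

end

theory Submission
  imports Defs
begin

text \<open>Averaging f over the M^n grid of angles (2\<pi>j/M)_j, shifted by a fixed vector w,
  recovers each coefficient f_\<mu>(I) exactly once M exceeds the spread of the frequencies in N.
  With a real shift this writes f_\<mu> as a finite combination of slices of f, so f_\<mu> is
  holomorphic in I; with the shift -\<i>t sgn \<mu>_j it gives the Cauchy estimate
  |f_\<mu>(I)| \<le> \<parallel>f\<parallel>_\<sigma> e^{-t|\<mu>|_1} for t < \<sigma>. Since r|N|n < 1/2 and \<mu>_k \<noteq> 0, the divisor
  satisfies |I\<cdot>\<mu>| > L/2, and summing e^{-(t-\<sigma>')|\<mu>|_1} over the box |\<mu>_j| \<le> |N| gives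
  the factor (4/(\<sigma>-\<sigma>'))^n.\<close>

lemma vec_set_eq_image_PiE:
  "{v::'a^'n::finite. \<forall>i. v$i \<in> A} = vec_lambda ` PiE UNIV (\<lambda>_. A)"
proof
  show "{v::'a^'n. \<forall>i. v$i \<in> A} \<subseteq> vec_lambda ` PiE UNIV (\<lambda>_. A)"
  proof
    fix v :: "'a^'n" assume "v \<in> {v. \<forall>i. v$i \<in> A}"
    then have "vec_nth v \<in> PiE UNIV (\<lambda>_. A)" by auto
    then show "v \<in> vec_lambda ` PiE UNIV (\<lambda>_. A)" by (metis image_eqI vec_nth_inverse)
  qed
qed auto

lemma finite_vec_set: "finite A \<Longrightarrow> finite {v::'a^'n::finite. \<forall>i. v$i \<in> A}"
  unfolding vec_set_eq_image_PiE by (intro finite_imageI finite_PiE) auto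

lemma card_vec_set: "card {v::'a^'n::finite. \<forall>i. v$i \<in> A} = card A ^ CARD('n)"
proof -
  have "card {v::'a^'n. \<forall>i. v$i \<in> A} = card (PiE (UNIV::'n set) (\<lambda>_. A))"
    unfolding vec_set_eq_image_PiE by (intro card_image inj_onI) (auto simp: vec_lambda_inject)
  then show ?thesis by (simp add: card_PiE)
qed

lemma prod_sum_eq_sum_vec_set:
  fixes g :: "'n::finite \<Rightarrow> 'a \<Rightarrow> 'c::comm_semiring_1"
  assumes "finite A"
  shows "(\<Prod>i\<in>UNIV. \<Sum>a\<in>A. g i a) = (\<Sum>v\<in>{v::'a^'n. \<forall>i. v$i \<in> A}. \<Prod>i\<in>UNIV. g i (v$i))"
proof -
  have "(\<Prod>i\<in>UNIV. \<Sum>a\<in>A. g i a) = (\<Sum>h\<in>PiE UNIV (\<lambda>_. A). \<Prod>i\<in>UNIV. g i (h i))"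
    by (rule prod_sum_PiE) (use assms in auto)
  also have "\<dots> = (\<Sum>v\<in>vec_lambda ` PiE UNIV (\<lambda>_. A). \<Prod>i\<in>UNIV. g i (v$i))"
    by (subst sum.reindex) (auto intro: inj_onI simp: vec_lambda_inject)
  finally show ?thesis unfolding vec_set_eq_image_PiE .
qed

lemma sum_roots_of_unity_power:
  fixes d :: int and M :: nat
  assumes "\<bar>d\<bar> < int M"
  shows "(\<Sum>x\<in>{0..<int M}. exp (\<i> * complex_of_real (2*pi*real_of_int x / real M) * of_int d))
    = (if d = 0 then of_nat M else 0)"
proof (cases "d = 0")
  case False
  define w where "w = exp (\<i> * complex_of_real (2*pi*real_of_int d / real M))"
  have M0: "M > 0" using assms by auto
  have w_power: "w ^ m = exp (of_nat m * (\<i> * complex_of_real (2*pi*real_of_int d / real M)))" for m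
    unfolding w_def by (rule exp_of_nat_mult[symmetric])
  have "(\<Sum>x\<in>{0..<int M}. exp (\<i> * complex_of_real (2*pi*real_of_int x / real M) * of_int d))
      = (\<Sum>x\<in>{0..<int M}. w ^ nat x)"
    by (intro sum.cong refl) (auto simp: w_power field_simps)
  also have "\<dots> = (\<Sum>x<M. w ^ x)"
    by (rule sum.reindex_bij_witness[where i=int and j=nat]) auto
  also have "w \<noteq> 1"
  proof
    assume "w = 1"
    then obtain m :: int where "2*pi*real_of_int d / real M = 2 * pi * of_int m"
      unfolding w_def exp_eq_1 by auto
    then have "real_of_int d = real M * of_int m" using M0 by (simp add: field_simps)
    then have "d = int M * m" by (metis of_int_eq_iff of_int_mult of_int_of_nat_eq)
    with False assms show False by (cases "m = 0") (auto simp: abs_mult mult_le_cancel_left1)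
  qed
  then have "(\<Sum>x<M. w ^ x) = (1 - w^M) / (1 - w)" by (simp add: sum_gp_strict)
  also have "w ^ M = 1"
    unfolding w_power using M0 by (simp add: exp_eq_1 field_simps)
  finally show ?thesis using False by simp
qed simp

definition angle_grid :: "nat \<Rightarrow> (int^'n) set" where
  "angle_grid M = {j. \<forall>i. j$i \<in> {0..<int M}}"

definition grid_point :: "nat \<Rightarrow> complex^'n \<Rightarrow> int^'n \<Rightarrow> complex^'n" where
  "grid_point M w j = (\<chi> i. complex_of_real (2*pi*real_of_int (j$i) / real M) + w$i)"

definition grid_coeff ::
  "nat \<Rightarrow> complex^'n \<Rightarrow> ((complex^'n) \<times> (complex^'n) \<Rightarrow> complex) \<Rightarrow> int^'n \<Rightarrow> complex^'n \<Rightarrow> complex"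
  where "grid_coeff M w f \<mu> I = (\<Sum>j\<in>angle_grid M.
           f (I, grid_point M w j) * exp (- (\<i> * cdot (grid_point M w j) \<mu>))) / of_nat M ^ CARD('n)"

lemma finite_angle_grid: "finite (angle_grid M :: (int^'n::finite) set)"
  unfolding angle_grid_def by (rule finite_vec_set) simp

lemma card_angle_grid: "card (angle_grid M :: (int^'n::finite) set) = M ^ CARD('n)"
  unfolding angle_grid_def card_vec_set by simp

lemma cdot_add: "cdot (x + y) \<mu> = cdot x \<mu> + cdot y \<mu>"
  unfolding cdot_def by (simp add: algebra_simps sum.distrib)

lemma cdot_scaleR: "cdot (c *\<^sub>R x) \<mu> = c *\<^sub>R cdot x \<mu>"
  unfolding cdot_def by (simp add: scaleR_sum_right)

lemma cdot_cmult: "cdot (\<chi> i. c * x $ i) \<mu> = c * cdot x \<mu>"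
  unfolding cdot_def by (simp add: sum_distrib_left algebra_simps)

lemma cdot_diff_right: "cdot x (\<nu> - \<mu>) = cdot x \<nu> - cdot x \<mu>"
  unfolding cdot_def by (simp add: sum_subtractf algebra_simps)

lemma sum_angle_grid_exp_cdot:
  fixes d :: "int^'n::finite"
  assumes "\<forall>i. \<bar>d$i\<bar> < int M"
  shows "(\<Sum>j\<in>angle_grid M. exp (\<i> * cdot (grid_point M w j) d))
    = (if d = 0 then of_nat M ^ CARD('n) else 0)"
proof -
  define g where "g i x = exp (\<i> * w$i * of_int (d$i))
    * exp (\<i> * complex_of_real (2*pi*real_of_int x / real M) * of_int (d$i))" for i x
  have factor: "exp (\<i> * cdot (grid_point M w j) d) = (\<Prod>i\<in>UNIV. g i (j$i))" for j
    unfolding cdot_def sum_distrib_left exp_sum[OF finite]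
    by (intro prod.cong refl) (simp add: g_def grid_point_def exp_add[symmetric] algebra_simps)
  have "(\<Sum>j\<in>angle_grid M. exp (\<i> * cdot (grid_point M w j) d)) = (\<Prod>i\<in>UNIV. \<Sum>x\<in>{0..<int M}. g i x)"
    unfolding factor angle_grid_def by (rule prod_sum_eq_sum_vec_set[symmetric]) simp
  also have "\<dots> = (\<Prod>i\<in>UNIV. exp (\<i> * w$i * of_int (d$i)) * (if d$i = 0 then of_nat M else 0))"
    unfolding g_def sum_distrib_left[symmetric]
    by (intro prod.cong refl, subst sum_roots_of_unity_power) (use assms in auto)
  also have "\<dots> = (if d = 0 then of_nat M ^ CARD('n) else 0)"
  proof (cases "d = 0")
    case False
    then obtain i where "d$i \<noteq> 0" by (metis vec_eq_iff zero_index)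
    then show ?thesis using False by (intro trans[OF prod_zero]) auto
  qed simp
  finally show ?thesis .
qed

lemma set_norm_nonneg: "finite N \<Longrightarrow> set_norm N \<ge> 0"
  unfolding set_norm_def by (intro Max_ge) auto

lemma abs_nth_le_set_norm:
  assumes "finite N" "\<mu> \<in> N"
  shows "\<bar>\<mu> $ i\<bar> \<le> set_norm N"
proof -
  have "\<bar>\<mu> $ i\<bar> \<le> mu_norm \<mu>" unfolding mu_norm_def by (rule Max_ge) auto
  also have "\<dots> \<le> set_norm N" unfolding set_norm_def using assms by (intro Max_ge) auto
  finally show ?thesis .
qed

lemma fourier_coeff_eq_grid_coeff:
  fixes N :: "(int^'n::finite) set"
  assumes "finite N" "\<mu> \<in> N" "2 * set_norm N < int M"
  shows "fc \<mu> I = grid_coeff M w (fourier N fc) \<mu> I"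
proof -
  have spread: "\<bar>\<nu>$i - \<mu>$i\<bar> < int M" if "\<nu> \<in> N" for \<nu> i
    using abs_nth_le_set_norm[OF assms(1) that, of i] abs_nth_le_set_norm[OF assms(1,2), of i] assms(3)
    by linarith
  have "M > 0" using assms(3) set_norm_nonneg[OF assms(1)] by linarith
  have "(\<Sum>j\<in>angle_grid M. fourier N fc (I, grid_point M w j) * exp (- (\<i> * cdot (grid_point M w j) \<mu>)))
      = (\<Sum>j\<in>angle_grid M. \<Sum>\<nu>\<in>N. fc \<nu> I * exp (\<i> * cdot (grid_point M w j) (\<nu> - \<mu>)))"
    unfolding fourier_def cdot_diff_right
    by (intro sum.cong refl) (simp add: sum_distrib_right mult.assoc right_diff_distrib exp_diff exp_minus divide_inverse)
  also have "\<dots> = (\<Sum>\<nu>\<in>N. fc \<nu> I * (\<Sum>j\<in>angle_grid M. exp (\<i> * cdot (grid_point M w j) (\<nu> - \<mu>))))"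
    by (subst sum.swap) (simp add: sum_distrib_left)
  also have "\<dots> = (\<Sum>\<nu>\<in>N. if \<nu> = \<mu> then fc \<mu> I * of_nat M ^ CARD('n) else 0)"
    by (intro sum.cong refl, subst sum_angle_grid_exp_cdot) (use spread in auto)
  also have "\<dots> = fc \<mu> I * of_nat M ^ CARD('n)" using assms by simp
  finally show ?thesis unfolding grid_coeff_def using \<open>M > 0\<close> by simp
qed


definition holo_at :: "((complex^'n) \<times> (complex^'n) \<Rightarrow> complex) \<Rightarrow> (complex^'n) \<times> (complex^'n) \<Rightarrow> bool"
  where "holo_at f z \<longleftrightarrow> (\<exists>D. (f has_derivative D) (at z) \<and> cplx_linear2 D)"

lemma analytic2_on_iff_holo_at: "analytic2_on f S \<longleftrightarrow> (\<forall>z\<in>S. holo_at f z)"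
  unfolding analytic2_on_def holo_at_def ..

lemma holo_at_linear:
  "linear D \<Longrightarrow> (\<And>c I phi. D ((\<chi> i. c * I $ i), (\<chi> i. c * phi $ i)) = c * D (I, phi)) \<Longrightarrow> holo_at D z"
  unfolding holo_at_def cplx_linear2_def by (auto intro: linear_imp_has_derivative)

lemma holo_at_const: "holo_at (\<lambda>_. c) z"
  unfolding holo_at_def cplx_linear2_def by (intro exI[of _ "\<lambda>_. 0"]) (auto intro: linear_zero)

lemma holo_at_add:
  assumes "holo_at f z" "holo_at g z"
  shows "holo_at (\<lambda>x. f x + g x) z"
proof -
  obtain D E where "(f has_derivative D) (at z)" "cplx_linear2 D" "(g has_derivative E) (at z)" "cplx_linear2 E"
    using assms unfolding holo_at_def by blast
  then show ?thesis unfolding holo_at_def cplx_linear2_def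
    by (intro exI[of _ "\<lambda>h. D h + E h"]) (auto intro: derivative_intros linear_compose_add simp: algebra_simps)
qed

lemma holo_at_mult:
  assumes "holo_at f z" "holo_at g z"
  shows "holo_at (\<lambda>x. f x * g x) z"
proof -
  obtain D E where D: "(f has_derivative D) (at z)" "cplx_linear2 D"
    and E: "(g has_derivative E) (at z)" "cplx_linear2 E"
    using assms unfolding holo_at_def by blast
  have d: "((\<lambda>x. f x * g x) has_derivative (\<lambda>h. f z * E h + D h * g z)) (at z)"
    using D(1) E(1) by (rule has_derivative_mult)
  show ?thesis unfolding holo_at_def cplx_linear2_def using d has_derivative_linear[OF d] D(2) E(2)
    by (intro exI[of _ "\<lambda>h. f z * E h + D h * g z"]) (auto simp: cplx_linear2_def algebra_simps)
qed

lemma holo_at_sum: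
  "finite A \<Longrightarrow> (\<And>a. a \<in> A \<Longrightarrow> holo_at (f a) z) \<Longrightarrow> holo_at (\<lambda>x. \<Sum>a\<in>A. f a x) z"
  by (induction A rule: finite_induct) (auto intro: holo_at_const holo_at_add)

lemma holo_at_inverse:
  assumes "holo_at f z" "f z \<noteq> 0"
  shows "holo_at (\<lambda>x. inverse (f x)) z"
proof -
  obtain D where D: "(f has_derivative D) (at z)" "cplx_linear2 D"
    using assms unfolding holo_at_def by blast
  have d: "((\<lambda>x. inverse (f x)) has_derivative (\<lambda>h. - (inverse (f z) * D h * inverse (f z)))) (at z)"
    using Deriv.has_derivative_inverse[OF assms(2) D(1)] .
  show ?thesis unfolding holo_at_def cplx_linear2_def using d has_derivative_linear[OF d] D(2)
    by (intro exI[of _ "\<lambda>h. - (inverse (f z) * D h * inverse (f z))"]) (auto simp: cplx_linear2_def algebra_simps)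
qed

lemma holo_at_exp:
  assumes "holo_at f z"
  shows "holo_at (\<lambda>x. exp (f x)) z"
proof -
  obtain D where D: "(f has_derivative D) (at z)" "cplx_linear2 D"
    using assms unfolding holo_at_def by blast
  have "(exp has_derivative (\<lambda>h. exp (f z) * h)) (at (f z))"
    using DERIV_exp[of "f z", unfolded has_field_derivative_def] .
  from has_derivative_compose[OF D(1) this]
  have d: "((\<lambda>x. exp (f x)) has_derivative (\<lambda>h. exp (f z) * D h)) (at z)" .
  show ?thesis unfolding holo_at_def cplx_linear2_def using d has_derivative_linear[OF d] D(2)
    by (intro exI[of _ "\<lambda>h. exp (f z) * D h"]) (auto simp: cplx_linear2_def algebra_simps)
qed

lemma holo_at_cdot_fst: "holo_at (\<lambda>x. cdot (fst x) \<mu>) z"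
  by (rule holo_at_linear) (auto intro!: linearI simp: cdot_add cdot_scaleR cdot_cmult)

lemma holo_at_cdot_snd: "holo_at (\<lambda>x. cdot (snd x) \<mu>) z"
  by (rule holo_at_linear) (auto intro!: linearI simp: cdot_add cdot_scaleR cdot_cmult)

lemma holo_at_fst_slice:
  assumes "holo_at f (fst z, c)"
  shows "holo_at (\<lambda>x. f (fst x, c)) z"
proof -
  obtain D where D: "(f has_derivative D) (at (fst z, c))" "cplx_linear2 D"
    using assms unfolding holo_at_def by blast
  have "((\<lambda>x. (fst x, c)) has_derivative (\<lambda>h. (fst h, 0))) (at z)"
    by (auto intro!: derivative_eq_intros)
  from has_derivative_compose[OF this D(1)]
  have d: "((\<lambda>x. f (fst x, c)) has_derivative (\<lambda>h. D (fst h, 0))) (at z)" .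
  have "D ((\<chi> i. c' * I $ i), 0) = c' * D (I, 0)" for c' I
    using D(2) unfolding cplx_linear2_def by (metis (no_types) mult_zero_right zero_index vec_eq_iff vec_lambda_beta)
  then show ?thesis unfolding holo_at_def cplx_linear2_def using d has_derivative_linear[OF d]
    by (intro exI[of _ "\<lambda>h. D (fst h, 0)"]) auto
qed

lemma holo_at_grid_coeff:
  fixes f :: "(complex^'n::finite) \<times> (complex^'n) \<Rightarrow> complex"
  assumes "\<And>j. holo_at f (fst z, grid_point M w j)"
  shows "holo_at (\<lambda>x. grid_coeff M w f \<mu> (fst x)) z"
  unfolding grid_coeff_def divide_inverse
  by (intro holo_at_mult holo_at_const holo_at_sum finite_angle_grid holo_at_fst_slice assms)


lemma norm_cdot_gt_half:
  fixes N :: "(int^'n::finite) set"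
  assumes "L > 0" and I: "(I, phi) \<in> dom_D k L r s"
    and "finite N" "\<mu> \<in> N" "\<mu> $ k \<noteq> 0"
    and small: "r * (2 * real CARD('n) * real_of_int (set_norm N)) < 1"
  shows "L / 2 < cmod (cdot I \<mu>)"
proof -
  define K where "K = real_of_int (set_norm N)"
  define e where "e i = I $ i - (if i = k then complex_of_real L else 0)" for i
  have e: "cmod (e i) < r * L" for i using I unfolding dom_D_def e_def by auto
  have \<mu>: "\<bar>real_of_int (\<mu>$i)\<bar> \<le> K" for i
    unfolding K_def using abs_nth_le_set_norm[OF assms(3,4)] by (metis of_int_abs of_int_le_iff)
  have "cdot I \<mu> = (\<Sum>i\<in>UNIV. (if i = k then complex_of_real L else 0) * of_int (\<mu>$i)) + (\<Sum>i\<in>UNIV. e i * of_int (\<mu>$i))"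
    unfolding cdot_def e_def by (simp add: sum.distrib[symmetric] algebra_simps)
  also have "(\<Sum>i\<in>UNIV. (if i = k then complex_of_real L else 0) * of_int (\<mu>$i)) = complex_of_real L * of_int (\<mu>$k)"
    by (subst sum.cong[OF refl, of _ _ "\<lambda>i. if i = k then complex_of_real L * of_int (\<mu>$k) else 0"]) auto
  finally have split: "cdot I \<mu> = complex_of_real L * of_int (\<mu>$k) + (\<Sum>i\<in>UNIV. e i * of_int (\<mu>$i))" .
  have "cmod (\<Sum>i\<in>UNIV. e i * of_int (\<mu>$i)) \<le> (\<Sum>i\<in>UNIV. cmod (e i) * \<bar>real_of_int (\<mu>$i)\<bar>)"
    by (rule order_trans[OF norm_sum]) (simp add: norm_mult)
  also have "\<dots> \<le> (\<Sum>i\<in>(UNIV::'n set). r * L * K)"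
    using e \<mu> by (intro sum_mono mult_mono) (auto intro: less_imp_le order_trans[OF norm_ge_zero])
  also have "\<dots> = L * (r * (real CARD('n) * K))" by simp
  also have "\<dots> < L * (1/2)" using small \<open>L > 0\<close> unfolding K_def by (intro mult_strict_left_mono) auto
  finally have perturbation: "cmod (\<Sum>i\<in>UNIV. e i * of_int (\<mu>$i)) < L / 2" by simp
  have "L \<le> cmod (complex_of_real L * of_int (\<mu>$k))"
    using \<open>\<mu> $ k \<noteq> 0\<close> \<open>L > 0\<close> by (simp add: norm_mult mult_le_cancel_left1)
  then show ?thesis
    unfolding split using perturbation norm_triangle_ineq2[of "complex_of_real L * of_int (\<mu>$k)" "- (\<Sum>i\<in>UNIV. e i * of_int (\<mu>$i))"]
    by simp
qed

definition l1_norm :: "int^'n::finite \<Rightarrow> real" where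
  "l1_norm \<mu> = (\<Sum>i\<in>UNIV. \<bar>real_of_int (\<mu>$i)\<bar>)"

lemma norm_exp_cdot_le:
  assumes "\<forall>i. \<bar>Im (phi $ i)\<bar> \<le> s"
  shows "cmod (exp (\<i> * cdot phi \<mu>)) \<le> exp (s * l1_norm \<mu>)"
proof -
  have "Re (\<i> * cdot phi \<mu>) = (\<Sum>i\<in>UNIV. - Im (phi $ i) * real_of_int (\<mu>$i))"
    unfolding cdot_def by (simp add: Im_sum sum_negf)
  also have "\<dots> \<le> (\<Sum>i\<in>UNIV. \<bar>Im (phi $ i)\<bar> * \<bar>real_of_int (\<mu>$i)\<bar>)"
    by (intro sum_mono) (metis abs_ge_self abs_minus_cancel abs_mult mult_minus_left)
  also have "\<dots> \<le> (\<Sum>i\<in>UNIV. s * \<bar>real_of_int (\<mu>$i)\<bar>)"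
    using assms by (intro sum_mono mult_right_mono) auto
  also have "\<dots> = s * l1_norm \<mu>" unfolding l1_norm_def by (simp add: sum_distrib_left)
  finally show ?thesis by simp
qed

text \<open>The Cauchy estimate: the shift of the sampling grid moves the exponential
  e^{-\<i>\<mu>\<cdot>\<phi>} to modulus e^{-t|\<mu>|_1} while staying in the strip of width \<sigma>.\<close>
lemma norm_fourier_coeff_le:
  fixes N :: "(int^'n::finite) set"
  assumes "finite N" "\<mu> \<in> N" and I: "(I, phi) \<in> dom_D k L r s"
    and "0 \<le> t" "t < \<sigma>"
    and bound: "\<forall>p\<in>dom_D k L r \<sigma>. cmod (fourier N fc p) \<le> S"
  shows "cmod (fc \<mu> I) \<le> S * exp (- t * l1_norm \<mu>)"
proof -
  define M where "M = nat (2 * set_norm N + 1)"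
  have M: "2 * set_norm N < int M" "M > 0" using set_norm_nonneg[OF assms(1)] unfolding M_def by auto
  define w :: "complex^'n" where "w = (\<chi> i. \<i> * complex_of_real (- t * sgn (real_of_int (\<mu>$i))))"
  have Im_grid: "Im (grid_point M w j $ i) = - t * sgn (real_of_int (\<mu>$i))" for j i
    unfolding grid_point_def w_def by simp
  have mem: "(I, grid_point M w j) \<in> dom_D k L r \<sigma>" for j
    using I \<open>0 \<le> t\<close> \<open>t < \<sigma>\<close> unfolding dom_D_def by (auto simp: Im_grid abs_mult abs_sgn_eq)
  have norm_exp: "cmod (exp (- (\<i> * cdot (grid_point M w j) \<mu>))) = exp (- t * l1_norm \<mu>)" for j
  proof -
    have "Re (- (\<i> * cdot (grid_point M w j) \<mu>)) = (\<Sum>i\<in>UNIV. Im (grid_point M w j $ i) * real_of_int (\<mu>$i))"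
      unfolding cdot_def by (simp add: Im_sum)
    also have "\<dots> = - t * l1_norm \<mu>"
      unfolding l1_norm_def sum_distrib_left by (intro sum.cong refl) (simp add: Im_grid sgn_if)
    finally show ?thesis by simp
  qed
  have "cmod (fc \<mu> I) = cmod (\<Sum>j\<in>angle_grid M. fourier N fc (I, grid_point M w j)
      * exp (- (\<i> * cdot (grid_point M w j) \<mu>))) / real M ^ CARD('n)"
    by (subst fourier_coeff_eq_grid_coeff[OF assms(1,2) M(1), of fc I w])
      (simp add: grid_coeff_def norm_divide norm_power)
  also have "\<dots> \<le> (\<Sum>j\<in>(angle_grid M :: (int^'n) set). S * exp (- t * l1_norm \<mu>)) / real M ^ CARD('n)"
    using bound mem
    by (intro divide_right_mono order_trans[OF norm_sum] sum_mono)
      (simp_all only: norm_mult norm_exp mult_right_mono exp_ge_zero zero_le_power of_nat_0_le_iff)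
  also have "\<dots> = S * exp (- t * l1_norm \<mu>)" using M by (simp add: card_angle_grid)
  finally show ?thesis .
qed

lemma sum_exp_neg_le_inverse:
  fixes \<delta> :: real
  assumes "\<delta> > 0"
  shows "(\<Sum>m\<in>{1..n}. exp (- \<delta> * real m)) \<le> 1 / \<delta>"
proof -
  define q where "q = exp (- \<delta>)"
  have q: "0 < q" "q < 1" using assms unfolding q_def by auto
  have "exp (- \<delta> * real m) = q ^ m" for m
    unfolding q_def by (simp add: exp_of_nat_mult[symmetric] mult.commute)
  then have "(\<Sum>m\<in>{1..n}. exp (- \<delta> * real m)) = (\<Sum>m\<le>n. q ^ m) - 1"
    by (simp add: atMost_atLeast0 sum.atLeast_Suc_atMost)
  also have "\<dots> = (1 - q ^ Suc n) / (1 - q) - 1" using q by (simp add: sum_gp0)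
  also have "\<dots> \<le> q / (1 - q)" using q by (simp add: field_simps)
  also have "\<dots> \<le> 1 / \<delta>"
  proof -
    have "q * (1 + \<delta>) \<le> q * exp \<delta>" using q exp_ge_add_one_self[of \<delta>] by simp
    also have "q * exp \<delta> = 1" unfolding q_def by (simp add: exp_minus)
    finally show ?thesis using q assms by (simp add: field_simps)
  qed
  finally show ?thesis .
qed

lemma sum_exp_neg_abs_le:
  fixes \<delta> :: real and K :: int
  assumes "\<delta> > 0"
  shows "(\<Sum>m\<in>{-K..K}. exp (- \<delta> * \<bar>real_of_int m\<bar>)) \<le> 1 + 2 / \<delta>"
proof (cases "K < 0")
  case False
  then obtain n where n: "K = int n" by (metis nonneg_int_cases not_less)
  have symmetric: "(\<Sum>m\<in>{-int n..int n}. exp (- \<delta> * \<bar>real_of_int m\<bar>))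
      = 1 + 2 * (\<Sum>m\<in>{1..n}. exp (- \<delta> * real m))" for n
  proof (induction n)
    case (Suc n)
    have "{-int (Suc n)..int (Suc n)} = insert (- int (Suc n)) (insert (int (Suc n)) {-int n..int n})"
      by auto
    then show ?case using Suc by simp
  qed simp
  show ?thesis unfolding n symmetric using sum_exp_neg_le_inverse[OF assms, of n] by simp
qed (use assms in simp)

lemma sum_exp_neg_l1_norm_le:
  fixes N :: "(int^'n::finite) set"
  assumes bounded: "\<forall>\<mu>\<in>N. \<forall>i. \<bar>\<mu>$i\<bar> \<le> K" and "\<delta> > 0"
  shows "(\<Sum>\<mu>\<in>N. exp (- \<delta> * l1_norm \<mu>)) \<le> (1 + 2 / \<delta>) ^ CARD('n)"
proof -
  define B where "B = {v::int^'n. \<forall>i. v$i \<in> {-K..K}}"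
  have "finite B" unfolding B_def by (rule finite_vec_set) simp
  have "N \<subseteq> B" using bounded unfolding B_def by (force simp: abs_le_iff minus_le_iff)
  have factor: "exp (- \<delta> * l1_norm v) = (\<Prod>i\<in>UNIV. exp (- \<delta> * \<bar>real_of_int (v$i)\<bar>))" for v :: "int^'n"
    unfolding l1_norm_def by (simp add: sum_distrib_left exp_sum)
  have "(\<Sum>\<mu>\<in>N. exp (- \<delta> * l1_norm \<mu>)) \<le> (\<Sum>\<mu>\<in>B. exp (- \<delta> * l1_norm \<mu>))"
    by (rule sum_mono2[OF \<open>finite B\<close> \<open>N \<subseteq> B\<close>]) simp
  also have "\<dots> = (\<Prod>i\<in>(UNIV::'n set). \<Sum>m\<in>{-K..K}. exp (- \<delta> * \<bar>real_of_int m\<bar>))"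
    unfolding factor B_def by (rule prod_sum_eq_sum_vec_set[symmetric]) simp
  also have "\<dots> \<le> (\<Prod>i\<in>(UNIV::'n set). 1 + 2 / \<delta>)"
    by (rule prod_mono) (use sum_exp_neg_abs_le[OF \<open>\<delta> > 0\<close>, of K] in \<open>auto intro: sum_nonneg\<close>)
  finally show ?thesis by simp
qed


lemma Qop_analytic2_on:
  fixes N :: "(int^'n::finite) set"
  assumes "finite N" "L > 0" "0 < \<sigma>"
    and small: "r * (2 * real CARD('n) * real_of_int (set_norm N)) < 1"
    and analytic: "analytic2_on (fourier N fc) (dom_D k L r \<sigma>)"
  shows "analytic2_on (Qop k N fc) (dom_D k L r s)"
proof -
  define M where "M = nat (2 * set_norm N + 1)"
  have M: "2 * set_norm N < int M" using set_norm_nonneg[OF assms(1)] unfolding M_def by auto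
  have Qop_eq: "Qop k N fc = (\<lambda>x. - \<i> * (\<Sum>\<mu>\<in>{\<mu>\<in>N. \<mu> $ k \<noteq> 0}.
      grid_coeff M 0 (fourier N fc) \<mu> (fst x) * inverse (cdot (fst x) \<mu>) * exp (\<i> * cdot (snd x) \<mu>)))"
    using fourier_coeff_eq_grid_coeff[OF assms(1) _ M]
    by (auto simp: Qop_def divide_inverse intro!: sum.cong)
  have real_grid: "(fst z, grid_point M 0 j) \<in> dom_D k L r \<sigma>" if "z \<in> dom_D k L r s" for z j
    using that \<open>0 < \<sigma>\<close> unfolding dom_D_def by (cases z) (simp add: grid_point_def)
  show ?thesis
    unfolding analytic2_on_iff_holo_at Qop_eq
  proof (intro ballI holo_at_mult holo_at_const holo_at_sum holo_at_exp holo_at_inverse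
      holo_at_cdot_fst holo_at_cdot_snd holo_at_grid_coeff)
    fix z \<mu> j assume z: "z \<in> dom_D k L r s"
    show "holo_at (fourier N fc) (fst z, grid_point M 0 j)"
      using analytic real_grid[OF z] unfolding analytic2_on_iff_holo_at by blast
    assume "\<mu> \<in> {\<mu>\<in>N. \<mu> $ k \<noteq> 0}"
    then have "L / 2 < cmod (cdot (fst z) \<mu>)"
      using z by (intro norm_cdot_gt_half[OF \<open>L > 0\<close> _ \<open>finite N\<close> _ _ small, of _ "snd z"]) auto
    then show "cdot (fst z) \<mu> \<noteq> 0" using \<open>L > 0\<close> by auto
  qed (use assms in auto)
qed

lemma norm_Qop_summand_le:
  fixes N :: "(int^'n::finite) set"
  assumes "finite N" "L > 0" "\<mu> \<in> N" "\<mu> $ k \<noteq> 0"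
    and small: "r * (2 * real CARD('n) * real_of_int (set_norm N)) < 1"
    and z: "(I, phi) \<in> dom_D k L r \<sigma>'" and "0 \<le> t" "t < \<sigma>" "0 \<le> S"
    and bound: "\<forall>p\<in>dom_D k L r \<sigma>. cmod (fourier N fc p) \<le> S"
  shows "cmod (fc \<mu> I / cdot I \<mu> * exp (\<i> * cdot phi \<mu>)) \<le> 2 * S / L * exp (- (t - \<sigma>') * l1_norm \<mu>)"
proof -
  have "cmod (fc \<mu> I) \<le> S * exp (- t * l1_norm \<mu>)"
    using norm_fourier_coeff_le[OF assms(1,3) z \<open>0 \<le> t\<close> \<open>t < \<sigma>\<close> bound] .
  moreover have "inverse (cmod (cdot I \<mu>)) \<le> 2 / L"
    using norm_cdot_gt_half[OF \<open>L > 0\<close> z assms(1,3,4) small] \<open>L > 0\<close>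
    by (metis inverse_divide le_imp_inverse_le less_imp_le zero_less_divide_iff zero_less_numeral)
  moreover have "cmod (exp (\<i> * cdot phi \<mu>)) \<le> exp (\<sigma>' * l1_norm \<mu>)"
    using z by (intro norm_exp_cdot_le) (auto simp: dom_D_def less_imp_le)
  ultimately have "cmod (fc \<mu> I / cdot I \<mu> * exp (\<i> * cdot phi \<mu>))
      \<le> S * exp (- t * l1_norm \<mu>) * (2 / L) * exp (\<sigma>' * l1_norm \<mu>)"
    unfolding norm_mult norm_divide divide_inverse using \<open>0 \<le> S\<close> \<open>L > 0\<close>
    by (intro mult_mono) (auto simp: divide_inverse norm_inverse)
  also have "\<dots> = 2 * S / L * exp (- (t - \<sigma>') * l1_norm \<mu>)"
    by (simp add: mult_exp_exp algebra_simps)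
  finally show ?thesis .
qed

text \<open>The choice t = \<sigma>' + \<delta> with \<delta> = 2(\<sigma>-\<sigma>')/3 turns the box sum (1 + 2/\<delta>)^n into
  (1 + 3/(\<sigma>-\<sigma>'))^n, which is at most (4/(\<sigma>-\<sigma>'))^n because \<sigma>-\<sigma>' \<le> 1.\<close>
lemma norm_Qop_le:
  fixes N :: "(int^'n::finite) set"
  assumes "finite N" "L > 0"
    and small: "r * (2 * real CARD('n) * real_of_int (set_norm N)) < 1"
    and "0 < \<sigma>'" "\<sigma>' < \<sigma>" "\<sigma> \<le> 1" "0 \<le> S"
    and bound: "\<forall>p\<in>dom_D k L r \<sigma>. cmod (fourier N fc p) \<le> S"
    and z: "z \<in> dom_D k L r \<sigma>'"
  shows "cmod (Qop k N fc z) \<le> 2 * (4 / (\<sigma> - \<sigma>')) ^ CARD('n) / L * S"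
proof -
  obtain I phi where z_eq: "z = (I, phi)" by fastforce
  define \<delta> where "\<delta> = 2 * (\<sigma> - \<sigma>') / 3"
  define t where "t = \<sigma>' + \<delta>"
  have "\<delta> > 0" "0 \<le> t" "t < \<sigma>" unfolding t_def \<delta>_def using \<open>0 < \<sigma>'\<close> \<open>\<sigma>' < \<sigma>\<close> by (auto simp: field_simps)
  have "cmod (Qop k N fc z) \<le> (\<Sum>\<mu>\<in>{\<mu>\<in>N. \<mu> $ k \<noteq> 0}. cmod (fc \<mu> I / cdot I \<mu> * exp (\<i> * cdot phi \<mu>)))"
    unfolding Qop_def z_eq by (simp add: norm_mult norm_sum)
  also have "\<dots> \<le> (\<Sum>\<mu>\<in>{\<mu>\<in>N. \<mu> $ k \<noteq> 0}. 2 * S / L * exp (- \<delta> * l1_norm \<mu>))"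
    using norm_Qop_summand_le[OF \<open>finite N\<close> \<open>L > 0\<close> _ _ small z[unfolded z_eq] \<open>0 \<le> t\<close> \<open>t < \<sigma>\<close> \<open>0 \<le> S\<close> bound]
    by (intro sum_mono) (simp add: t_def)
  also have "\<dots> \<le> (\<Sum>\<mu>\<in>N. 2 * S / L * exp (- \<delta> * l1_norm \<mu>))"
    using \<open>finite N\<close> \<open>0 \<le> S\<close> \<open>L > 0\<close> by (intro sum_mono2) auto
  also have "\<dots> \<le> 2 * S / L * (1 + 2 / \<delta>) ^ CARD('n)"
    unfolding sum_distrib_left[symmetric] using \<open>0 \<le> S\<close> \<open>L > 0\<close> abs_nth_le_set_norm[OF \<open>finite N\<close>]
    by (intro mult_left_mono sum_exp_neg_l1_norm_le \<open>\<delta> > 0\<close>) auto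
  also have "\<dots> \<le> 2 * S / L * (4 / (\<sigma> - \<sigma>')) ^ CARD('n)"
  proof (intro mult_left_mono power_mono)
    have "1 + 2 / \<delta> = 1 + 3 / (\<sigma> - \<sigma>')" unfolding \<delta>_def using \<open>\<sigma>' < \<sigma>\<close> by (simp add: field_simps)
    also have "\<dots> \<le> 1 / (\<sigma> - \<sigma>') + 3 / (\<sigma> - \<sigma>')"
      using \<open>\<sigma>' < \<sigma>\<close> \<open>\<sigma> \<le> 1\<close> \<open>0 < \<sigma>'\<close> le_divide_eq_1_pos[of "\<sigma> - \<sigma>'" 1] by linarith
    also have "\<dots> = 4 / (\<sigma> - \<sigma>')" by (simp add: add_divide_distrib[symmetric])
    finally show "1 + 2 / \<delta> \<le> 4 / (\<sigma> - \<sigma>')" .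
  qed (use \<open>0 \<le> S\<close> \<open>L > 0\<close> \<open>\<delta> > 0\<close> in auto)
  finally show ?thesis by (simp add: field_simps)
qed

lemma SUP_norm_le_mult_SUP_norm:
  fixes f :: "'a \<Rightarrow> 'b::real_normed_vector" and g :: "'c \<Rightarrow> 'd::real_normed_vector"
  assumes "C > 0" "A \<noteq> {}"
    and bound: "\<And>S z. 0 \<le> S \<Longrightarrow> \<forall>p\<in>A. norm (f p) \<le> S \<Longrightarrow> z \<in> B \<Longrightarrow> norm (g z) \<le> C * S"
  shows "(SUP z\<in>B. ereal (norm (g z))) \<le> ereal C * (SUP p\<in>A. ereal (norm (f p)))"
proof (cases "(SUP p\<in>A. ereal (norm (f p))) = \<infinity>")
  case False
  obtain p where "p \<in> A" using \<open>A \<noteq> {}\<close> by blast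
  then have "ereal (norm (f p)) \<le> (SUP p\<in>A. ereal (norm (f p)))" by (rule SUP_upper)
  with False obtain S where S: "(SUP p\<in>A. ereal (norm (f p))) = ereal S" "0 \<le> S"
    by (cases "SUP p\<in>A. ereal (norm (f p))") (auto intro: order_trans[OF norm_ge_zero])
  have "\<forall>p\<in>A. norm (f p) \<le> S"
    using SUP_upper[of _ A "\<lambda>p. ereal (norm (f p))"] S(1) by auto
  then have "(SUP z\<in>B. ereal (norm (g z))) \<le> ereal (C * S)"
    using bound[OF S(2)] by (intro SUP_least) auto
  then show ?thesis unfolding S(1) by simp
qed (use \<open>C > 0\<close> in simp)

lemma dom_D_nonempty: "L > 0 \<Longrightarrow> r > 0 \<Longrightarrow> \<sigma> > 0 \<Longrightarrow> dom_D k L r \<sigma> \<noteq> {}"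
  unfolding dom_D_def ex_in_conv[symmetric]
  by (intro exI[of _ "((\<chi> i. if i = k then complex_of_real L else 0), 0)"]) auto

theorem propositionA3:
  fixes k :: "'n::finite" and L r \<sigma> :: real
    and N :: "(int^'n) set" and fc :: "int^'n \<Rightarrow> complex^'n \<Rightarrow> complex"
  assumes "CARD('n) \<ge> 2"
    and "L > 0" and "0 < \<sigma>" and "\<sigma> \<le> 1" and "r > 0"
    and "finite N"
    and "analytic2_on (fourier N fc) (dom_D k L r \<sigma>)"
    and "r * (2 * real CARD('n) * real_of_int (set_norm N)) < 1"
  shows "\<forall>\<sigma>'. 0 < \<sigma>' \<and> \<sigma>' < \<sigma> \<longrightarrow>
           analytic2_on (Qop k N fc) (dom_D k L r \<sigma>') \<and>
           supnormD k L r \<sigma>' (Qop k N fc)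
             \<le> ereal (2 * (4 / (\<sigma> - \<sigma>')) ^ CARD('n) / L) * supnormD k L r \<sigma> (fourier N fc)"
proof (intro allI impI conjI; elim conjE)
  fix \<sigma>' :: real assume "0 < \<sigma>'" "\<sigma>' < \<sigma>"
  show "analytic2_on (Qop k N fc) (dom_D k L r \<sigma>')"
    using Qop_analytic2_on assms by blast
  have "0 < 2 * (4 / (\<sigma> - \<sigma>')) ^ CARD('n) / L" using \<open>\<sigma>' < \<sigma>\<close> \<open>L > 0\<close> by simp
  then show "supnormD k L r \<sigma>' (Qop k N fc)
      \<le> ereal (2 * (4 / (\<sigma> - \<sigma>')) ^ CARD('n) / L) * supnormD k L r \<sigma> (fourier N fc)"
    unfolding supnormD_def
    using norm_Qop_le[of N L r \<sigma>' \<sigma>] \<open>0 < \<sigma>'\<close> \<open>\<sigma>' < \<sigma>\<close> assms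
    by (intro SUP_norm_le_mult_SUP_norm dom_D_nonempty) auto
qed

end
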